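(* For all closed terms $s,t\in T(\Sigma_{FTP_/})$: if $s/c^n\sim t/c^n$ for all $n\in\mathbb N$, then $s\sim t$ (i.e. the Approximation Induction Principle $x=y$ if $x/c^n=y/c^n$ for all $n$ is sound for bisimilarity on $T(\Sigma_{FTP_/})$).
   Context: Fix a finite nonempty set $\mathcal A$ of actions, a finite set $\mathcal P$ of predicates, a subset $\mathcal P^I\subseteq\mathcal P$ of implicit predicates, and for each $P\in\mathcal P^I$ a set $\mathcal A_P\subseteq\mathcal A$. $\Sigma_{FTP_/}$ consists of $\delta$, constants $\kappa_P$ ($P\in\mathcal P$), unary prefixes $a.\_$ ($a\in\mathcal A$), binary $+$ and binary $\cdot/\cdot$. Semantics on closed terms: the least transition and predicate relations closed under: $a.x\xrightarrow{a}x$; $x\xrightarrow{a}x'\Rightarrow x+y\xrightarrow{a}x'$; $y\xrightarrow{a}y'\Rightarrow x+y\xrightarrow{a}y'$; $P\kappa_P$; $Px\Rightarrow P(x+y)$; $Py\Rightarrow P(x+y)$; $Px\Rightarrow P(a.x)$ for $P\in\mathcal P^I$, $a\in\mathcal A_P$; $x\xrightarrow{a}x'$ and $h\xrightarrow{c'}h'\Rightarrow x/h\xrightarrow{a}x'/h'$ for all actions $a,c'$; $Px\Rightarrow P(x/h)$. A fixed action $c$ is used: $c^0=\delta$, $c^{n+1}=c.c^n$. Bisimilarity $\sim$: largest symmetric relation $R$ with $(s,t)\in R$, $s\xrightarrow{a}s'$ implying $t\xrightarrow{a}t'$ for some $t'$ with $(s',t')\in R$, and $Ps$ implying $Pt$.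 *)

theory Defs
  imports Main
begin

text \<open>Closed terms over the signature FTP with the operator x/h.
  Actions are elements of a finite type 'a (finite, nonempty),
  predicates are elements of a finite type 'p.\<close>

datatype ('a, 'p) tm =
    Delta
  | Kappa 'p
  | Pre 'a "('a, 'p) tm"
  | Plus "('a, 'p) tm" "('a, 'p) tm"
  | Slash "('a, 'p) tm" "('a, 'p) tm"

inductive step :: "('a, 'p) tm \<Rightarrow> 'a \<Rightarrow> ('a, 'p) tm \<Rightarrow> bool" where
  pre: "step (Pre a x) a x"
| plusL: "step x a x' \<Longrightarrow> step (Plus x y) a x'"
| plusR: "step y a y' \<Longrightarrow> step (Plus x y) a y'"
| slash: "step x a x' \<Longrightarrow> step h c' h' \<Longrightarrow> step (Slash x h) a (Slash x' h')"

text \<open>Predicate relation, parametrised by the set PI of implicit predicates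
  and the sets AP P of actions for implicit predicates P.\<close>
inductive holds :: "'p set \<Rightarrow> ('p \<Rightarrow> 'a set) \<Rightarrow> 'p \<Rightarrow> ('a, 'p) tm \<Rightarrow> bool"
  for PI :: "'p set" and AP :: "'p \<Rightarrow> 'a set" where
  kappa: "holds PI AP P (Kappa P)"
| plusL: "holds PI AP P x \<Longrightarrow> holds PI AP P (Plus x y)"
| plusR: "holds PI AP P y \<Longrightarrow> holds PI AP P (Plus x y)"
| pre: "P \<in> PI \<Longrightarrow> a \<in> AP P \<Longrightarrow> holds PI AP P x \<Longrightarrow> holds PI AP P (Pre a x)"
| slash: "holds PI AP P x \<Longrightarrow> holds PI AP P (Slash x h)"

fun cpow :: "'a \<Rightarrow> nat \<Rightarrow> ('a, 'p) tm" where
  "cpow c 0 = Delta"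
| "cpow c (Suc n) = Pre c (cpow c n)"

definition is_bisim :: "'p set \<Rightarrow> ('p \<Rightarrow> 'a set) \<Rightarrow> (('a, 'p) tm \<times> ('a, 'p) tm) set \<Rightarrow> bool" where
  "is_bisim PI AP R \<longleftrightarrow> sym R \<and>
     (\<forall>(s, t) \<in> R. (\<forall>a s'. step s a s' \<longrightarrow> (\<exists>t'. step t a t' \<and> (s', t') \<in> R)) \<and>
                    (\<forall>P. holds PI AP P s \<longrightarrow> holds PI AP P t))"

definition bisimilar :: "'p set \<Rightarrow> ('p \<Rightarrow> 'a set) \<Rightarrow> ('a, 'p) tm \<Rightarrow> ('a, 'p) tm \<Rightarrow> bool" where
  "bisimilar PI AP s t \<longleftrightarrow> (\<exists>R. is_bisim PI AP R \<and> (s, t) \<in> R)"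

end

theory Submission
  imports Defs
begin

text \<open>Every closed term has finite depth and transitions strictly decrease it. Hence
  for n at least the depth of x, the clock c^n never runs out before x stops, and
  x is bisimilar to x/c^n (predicates are inherited by x/h from x alone). Given
  s/c^n \<sim> t/c^n for all n, take n above the depths of s and t and chain
  s \<sim> s/c^n \<sim> t/c^n \<sim> t.\<close>

fun depth :: "('a, 'p) tm \<Rightarrow> nat" where
  "depth Delta = 0"
| "depth (Kappa P) = 0"
| "depth (Pre a x) = Suc (depth x)"
| "depth (Plus x y) = max (depth x) (depth y)"
| "depth (Slash x h) = min (depth x) (depth h)"

lemma step_depth_less: "step x a x' \<Longrightarrow> depth x' < depth x"
  by (induction rule: step.induct) auto

lemma step_cpow_iff: "step (cpow c n) a h \<longleftrightarrow> 0 < n \<and> a = c \<and> h = cpow c (n - 1)"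
  by (cases n) (auto elim: step.cases intro: step.pre)

lemma step_SlashE:
  assumes "step (Slash x h) a y"
  obtains x' c' h' where "y = Slash x' h'" "step x a x'" "step h c' h'"
  using assms by (cases rule: step.cases) auto

lemma holds_Slash_iff: "holds PI AP P (Slash x h) \<longleftrightarrow> holds PI AP P x"
  by (auto elim: holds.cases intro: holds.slash)

definition is_sim :: "'p set \<Rightarrow> ('p \<Rightarrow> 'a set) \<Rightarrow> (('a, 'p) tm \<times> ('a, 'p) tm) set \<Rightarrow> bool" where
  "is_sim PI AP R \<longleftrightarrow>
     (\<forall>(s, t) \<in> R. (\<forall>a s'. step s a s' \<longrightarrow> (\<exists>t'. step t a t' \<and> (s', t') \<in> R)) \<and>
                    (\<forall>P. holds PI AP P s \<longrightarrow> holds PI AP P t))"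

lemma is_bisim_iff_sym_is_sim: "is_bisim PI AP R \<longleftrightarrow> sym R \<and> is_sim PI AP R"
  unfolding is_bisim_def is_sim_def ..

lemma is_sim_Un: "is_sim PI AP A \<Longrightarrow> is_sim PI AP B \<Longrightarrow> is_sim PI AP (A \<union> B)"
  unfolding is_sim_def by blast

lemma is_sim_relcomp: "is_sim PI AP A \<Longrightarrow> is_sim PI AP B \<Longrightarrow> is_sim PI AP (A O B)"
  unfolding is_sim_def by (fastforce simp: relcomp_unfold)

lemma bisimilarI:
  assumes "is_sim PI AP R" "is_sim PI AP (R\<inverse>)" "(s, t) \<in> R"
  shows "bisimilar PI AP s t"
proof -
  have "is_bisim PI AP (R \<union> R\<inverse>)"
    using assms(1,2) by (simp add: is_bisim_iff_sym_is_sim sym_Un_converse is_sim_Un)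
  then show ?thesis
    using assms(3) unfolding bisimilar_def by blast
qed

lemma bisimilar_sym: "bisimilar PI AP s t \<Longrightarrow> bisimilar PI AP t s"
  unfolding bisimilar_def is_bisim_iff_sym_is_sim by (meson symD)

lemma bisimilar_trans [trans]:
  assumes "bisimilar PI AP s t" "bisimilar PI AP t u"
  shows "bisimilar PI AP s u"
proof -
  obtain A B where A: "sym A" "is_sim PI AP A" "(s, t) \<in> A"
    and B: "sym B" "is_sim PI AP B" "(t, u) \<in> B"
    using assms unfolding bisimilar_def is_bisim_iff_sym_is_sim by blast
  have "(A O B)\<inverse> = B O A"
    using A(1) B(1) by (simp add: converse_relcomp sym_conv_converse_eq)
  then show ?thesis
    using A B by (intro bisimilarI[of PI AP "A O B"]) (auto intro: is_sim_relcomp)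
qed

lemma bisimilar_Slash_cpow:
  fixes x :: "('a, 'p) tm"
  assumes "depth x \<le> n"
  shows "bisimilar PI AP x (Slash x (cpow c n))"
proof -
  define R :: "(('a, 'p) tm \<times> ('a, 'p) tm) set"
    where "R = {(y, Slash y (cpow c m)) | y m. depth y \<le> m}"
  have step_forth: "\<exists>z. step (Slash y (cpow c m)) a z \<and> (y', z) \<in> R"
    if "depth y \<le> m" "step y a y'" for y m a y'
  proof -
    have "0 < m" "depth y' \<le> m - 1"
      using that step_depth_less by fastforce+
    then show ?thesis
      using step.slash[OF \<open>step y a y'\<close>, of "cpow c m" c "cpow c (m - 1)"]
      unfolding R_def by (auto simp: step_cpow_iff)
  qed
  have step_back: "\<exists>y'. step y a y' \<and> (y', z) \<in> R"
    if "depth y \<le> m" "step (Slash y (cpow c m)) a z" for y m a z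
    using that unfolding R_def
    by (fastforce elim!: step_SlashE simp: step_cpow_iff dest: step_depth_less)
  have "is_sim PI AP R" "is_sim PI AP (R\<inverse>)"
    using step_forth step_back by (auto simp: is_sim_def R_def holds_Slash_iff)
  then show ?thesis
    using assms unfolding R_def by (intro bisimilarI) auto
qed

theorem lemma4:
  fixes PI :: "('p::finite) set" and AP :: "'p \<Rightarrow> ('a::finite) set"
    and c :: 'a and s t :: "('a, 'p) tm"
  assumes "\<forall>n. bisimilar PI AP (Slash s (cpow c n)) (Slash t (cpow c n))"
  shows "bisimilar PI AP s t"
proof -
  define n where "n = max (depth s) (depth t)"
  have "bisimilar PI AP s (Slash s (cpow c n))"
    by (rule bisimilar_Slash_cpow) (simp add: n_def)
  also have "bisimilar PI AP \<dots> (Slash t (cpow c n))"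
    using assms by blast
  also have "bisimilar PI AP \<dots> t"
    by (rule bisimilar_sym, rule bisimilar_Slash_cpow) (simp add: n_def)
  finally show ?thesis .
qed

end
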